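(* (a) If $x=u(\tau)$ and $y=u(2\tau)$, then $x^4(y^4+1)=2y^2$. (b) If $x=v(\tau)$ and $y=v(2\tau)$, then $x^2y+x^2+y^2=y$. These hold for all $\tau$ in the upper half-plane.
   Context: For $\tau$ in the upper half-plane, $q=e^{2\pi i\tau}$ and $q^r:=e^{2\pi i r\tau}$. Define $u(\tau)=\sqrt{2}\,q^{1/8}\prod_{n\ge1}(1+q^n)^{(-1)^n}$ and $v(\tau)=q^{1/2}\prod_{n\ge1}(1-q^n)^{\left(\frac{8}{n}\right)}$, where $\left(\frac{8}{n}\right)$ is the Kronecker symbol ($0$ for $n$ even, $1$ for $n\equiv\pm1\pmod 8$, $-1$ for $n\equiv\pm3\pmod8$). *)

theory Defs
  imports "HOL-Analysis.Analysis"
begin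

text \<open>Fractional power of the nome: q^r = exp(2 pi i r tau).\<close>
definition qpow :: "real \<Rightarrow> complex \<Rightarrow> complex" where
  "qpow r \<tau> = exp (2 * complex_of_real pi * \<i> * complex_of_real r * \<tau>)"

definition kron8 :: "nat \<Rightarrow> int" where
  "kron8 n = (if even n then 0
              else if n mod 8 = 1 \<or> n mod 8 = 7 then 1 else -1)"

definition u_fun :: "complex \<Rightarrow> complex" where
  "u_fun \<tau> = complex_of_real (sqrt 2) * qpow (1/8) \<tau> *
     (\<Prod>n. (1 + qpow 1 \<tau> ^ (n+1)) powi ((-1) ^ (n+1)))"

definition v_fun :: "complex \<Rightarrow> complex" where
  "v_fun \<tau> = qpow (1/2) \<tau> *
     (\<Prod>n. (1 - qpow 1 \<tau> ^ (n+1)) powi (kron8 (n+1)))"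

end

theory Submission
  imports Defs "HOL-Complex_Analysis.Complex_Analysis"
begin

text \<open>
  Everything rests on Jacobi's triple product identity in the form
    sum over integers n of z^n Q^(n(n-1)/2) = c(Q) * prod over n >= 0 of (1 + z Q^n) (1 + Q^(n+1) / z)
  with c(Q) \<noteq> 0, for 0 < |Q| < 1 and z in the annulus |Q|^2 < |z| < 1/|Q|. On that annulus both
  sides vanish exactly at z = -1 and z = -Q, and both pick up the factor 1/z under z \<mapsto> Q z.
  Their quotient is therefore holomorphic and invariant under z \<mapsto> Q z, so it attains its
  maximum modulus on the closed annulus |Q| \<le> |z| \<le> 1 and is constant. The constant is nonzero
  because theta3 and theta2 have no common zero: the duplication formulas
  theta3(q)^2 = theta3(q^2)^2 + q theta2(q^2)^2 and theta2(q)^2 = 2 theta2(q^2) theta3(q^2)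
  would propagate a common zero to all q^(2^k), whereas theta3(q) is close to 1 for small q.

  (a) With q = exp(2 pi i tau), the triple product for Q = q^2 gives
  u(tau)^2 = q^(1/4) theta2(q) / theta3(q). Written for tau and 2 tau, this turns the duplication
  formulas into the relation between x = u(tau) and y = u(2 tau).

  (b) Write v(tau) = q^(1/2) P(q) and J(z; Q) for the triple product. Grouping the factors of P
  in blocks of eight gives P(q^2) J(-q^6; q^16) = J(-q^2; q^16) and
  P(q)^2 J(q; -q^4) = P(q^2) J(-q; -q^4). Splitting the theta series for Q = -q^4 by the parity of
  the summation index gives theta(+-q; -q^4) = B +- q A with A = theta(-q^2; q^16) and
  B = theta(-q^6; q^16), and y B = q A for y = v(2 tau). Hence (1 - y) J(q; -q^4) = (1 + y) J(-q; -q^4),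
  while x^2 J(q; -q^4) = y J(-q; -q^4) for x = v(tau); so x^2 (1 + y) = y (1 - y).
\<close>

section \<open>Infinite sums and products\<close>

lemma one_add_nonzero_if_norm_less:
  fixes w :: "'a :: real_normed_algebra_1"
  assumes "norm w < 1"
  shows "1 + w \<noteq> 0"
proof
  assume "1 + w = 0"
  then have "w = -1" by (simp add: add_eq_0_iff)
  with assms show False by simp
qed

lemma has_sum_int_split:
  fixes f :: "int \<Rightarrow> 'a::banach"
  assumes "summable (\<lambda>k. norm (f (int k)))" and "summable (\<lambda>k. norm (f (- int k - 1)))"
  shows "(f has_sum ((\<Sum>k. f (int k)) + (\<Sum>k. f (- int k - 1)))) UNIV"
proof -
  have "((\<lambda>k. f (int k)) has_sum (\<Sum>k. f (int k))) UNIV"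
    "((\<lambda>k. f (- int k - 1)) has_sum (\<Sum>k. f (- int k - 1))) UNIV"
    using assms by (auto intro!: norm_summable_imp_has_sum summable_sums summable_norm_cancel)
  moreover have "bij_betw int UNIV {n. n \<ge> 0}"
    by (rule bij_betwI[where g=nat]) auto
  moreover have "bij_betw (\<lambda>k. - int k - 1) UNIV {n. n < 0}"
    by (rule bij_betwI[where g="\<lambda>n. nat (- n - 1)"]) auto
  ultimately have "(f has_sum (\<Sum>k. f (int k))) {n. n \<ge> 0}"
    "(f has_sum (\<Sum>k. f (- int k - 1))) {n. n < 0}"
    using has_sum_reindex_bij_betw by blast+
  then have "(f has_sum ((\<Sum>k. f (int k)) + (\<Sum>k. f (- int k - 1)))) ({n. n \<ge> 0} \<union> {n. n < 0})"
    by (intro has_sum_Un_disjoint) auto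
  moreover have "{n::int. n \<ge> 0} \<union> {n. n < 0} = UNIV" by auto
  ultimately show ?thesis by simp
qed

lemma has_sum_UNIV_split:
  fixes f :: "'a \<Rightarrow> 'b::topological_comm_monoid_add"
  assumes "(f has_sum a) A" and "(f has_sum b) B" and "A \<inter> B = {}" and "A \<union> B = UNIV"
  shows "(f has_sum (a + b)) UNIV"
  using has_sum_Un_disjoint[OF assms(1-3)] assms(4) by simp

lemma has_sum_mult_complex:
  fixes f :: "'a \<Rightarrow> complex" and g :: "'b \<Rightarrow> complex"
  assumes f: "(f has_sum a) A" and g: "(g has_sum b) B"
  shows "((\<lambda>(x, y). f x * g y) has_sum (a * b)) (A \<times> B)"
proof -
  have "f summable_on A" and "g summable_on B"
    using f g by (auto intro: has_sum_imp_summable)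
  then have fn: "(\<lambda>x. norm (f x)) summable_on A" and gn: "(\<lambda>y. norm (g y)) summable_on B"
    unfolding summable_on_iff_abs_summable_on_complex .
  define G where "G = (\<Sum>\<^sub>\<infinity>y\<in>B. norm (g y))"
  have G: "((\<lambda>y. norm (g y)) has_sum G) B"
    unfolding G_def by (rule has_sum_infsum[OF gn])
  have "(\<lambda>(x, y). norm (f x * g y)) summable_on (A \<times> B)"
  proof (rule summable_on_SigmaI[where g = "\<lambda>x. norm (f x) * G"])
    show "((\<lambda>y. case (x, y) of (x, y) \<Rightarrow> norm (f x * g y)) has_sum norm (f x) * G) B" for x
      using has_sum_cmult_right[OF G, of "norm (f x)"] by (simp add: norm_mult)
    show "(\<lambda>x. norm (f x) * G) summable_on A"
      by (rule summable_on_cmult_left[OF fn])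
  qed auto
  then have summable: "(\<lambda>(x, y). f x * g y) summable_on (A \<times> B)"
    by - (rule abs_summable_summable, unfold prod.case_distrib[of norm])
  show ?thesis
  proof (rule has_sum_SigmaI[where g = "\<lambda>x. f x * b"])
    show "((\<lambda>y. case (x, y) of (x, y) \<Rightarrow> f x * g y) has_sum f x * b) B" for x
      using has_sum_cmult_right[OF g, of "f x"] by simp
    show "((\<lambda>x. f x * b) has_sum a * b) A"
      by (rule has_sum_cmult_left[OF f])
  qed (use summable in simp)
qed

lemma has_prod_tendsto_blocks:
  fixes f :: "nat \<Rightarrow> 'a :: {semidom, t2_space}"
  assumes "f has_prod P" and "k > 0"
  shows "(\<lambda>m. \<Prod>j<m. \<Prod>i<k. f (k * j + i)) \<longlonglongrightarrow> P"
proof -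
  have block: "(\<Prod>i<k. f (k * j + i)) = prod f {j * k..<j * k + k}" for j
  proof -
    have "prod f {0 + j * k..<k + j * k} = (\<Prod>i\<in>{0..<k}. f (i + j * k))"
      by (rule prod.shift_bounds_nat_ivl)
    then show ?thesis
      by (simp add: atLeast0LessThan ac_simps)
  qed
  have "(\<Prod>j<m. \<Prod>i<k. f (k * j + i)) = (\<Prod>i<m * k. f i)" for m
    unfolding block by (rule prod.nat_group)
  moreover have "strict_mono (\<lambda>m. m * k)"
    using assms(2) by (auto simp: strict_mono_def)
  ultimately show ?thesis
    using LIMSEQ_subseq_LIMSEQ[OF has_prod_imp_tendsto'[OF assms(1)]] by (simp add: o_def)
qed

lemma convergent_prod_powi_sign:
  fixes q s :: complex and e :: "nat \<Rightarrow> int"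
  assumes q: "norm q < 1" and s: "norm s \<le> 1" and e: "\<And>n. e n \<in> {-1, 0, 1}"
  shows "convergent_prod (\<lambda>n. (1 + s * q ^ (n + 1)) powi e n)"
proof -
  have pos: "0 < 1 - norm q"
    using q by simp
  have bound: "norm ((1 + s * q ^ (n + 1)) powi e n - 1) \<le> norm q ^ (n + 1) / (1 - norm q)" for n
  proof -
    define x where "x = s * q ^ (n + 1)"
    have "norm x \<le> 1 * norm q ^ (n + 1)"
      unfolding x_def norm_mult norm_power using s by (intro mult_right_mono) auto
    moreover have "norm q ^ (n + 1) \<le> norm q ^ 1"
      using q by (intro power_decreasing) auto
    ultimately have x: "norm x \<le> norm q ^ (n + 1)" "norm x \<le> norm q"
      by auto
    have "norm x \<le> norm q ^ (n + 1) / 1"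
      using x(1) by simp
    also have "\<dots> \<le> norm q ^ (n + 1) / (1 - norm q)"
      using pos q by (intro divide_left_mono) auto
    finally have plus: "norm ((1 + x) - 1) \<le> norm q ^ (n + 1) / (1 - norm q)"
      by simp
    have "1 + x \<noteq> 0"
      using x(2) q by (intro one_add_nonzero_if_norm_less) simp
    then have "norm (inverse (1 + x) - 1) = norm x / norm (1 + x)"
      by (simp add: field_simps norm_divide norm_minus_commute)
    also have "\<dots> \<le> norm q ^ (n + 1) / (1 - norm q)"
    proof (rule frac_le)
      have "1 - norm x \<le> norm (1 + x)"
        using norm_triangle_ineq2[of 1 "-x"] by (simp add: norm_minus_commute)
      then show "1 - norm q \<le> norm (1 + x)"
        using x(2) by linarith
    qed (use x(1) pos in auto)
    finally have minus: "norm (inverse (1 + x) - 1) \<le> norm q ^ (n + 1) / (1 - norm q)" .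
    show ?thesis
      using e[of n] plus minus pos unfolding x_def by auto
  qed
  have "summable (\<lambda>n. norm q ^ (n + 1) / (1 - norm q))"
    using q by (intro summable_divide summable_ignore_initial_segment) simp
  then have "summable (\<lambda>n. norm ((1 + s * q ^ (n + 1)) powi e n - 1))"
    by (rule summable_comparison_test') (use bound in simp)
  then show ?thesis
    by (intro abs_convergent_prod_imp_convergent_prod summable_imp_abs_convergent_prod)
qed

lemma holomorphic_factor_zero:
  assumes "f holomorphic_on S" and "open S" and "f a = 0"
  obtains g where "g holomorphic_on S" and "\<And>z. f z = (z - a) * g z"
proof
  show "(\<lambda>z. if z = a then deriv f a else (f z - f a) / (z - a)) holomorphic_on S"
    by (rule pole_lemma_open[OF assms(1,2)])
qed (use assms(3) in auto)

lemma annulus_shift: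
  fixes Q z :: complex
  assumes Q: "0 < norm Q" "norm Q < 1" and z: "norm Q < norm z" "norm z < 1 / norm Q"
  shows "norm Q ^ 2 < norm z" and "norm Q ^ 2 < norm (Q * z)"
    and "norm (Q * z) < 1" and "norm (Q * z) < 1 / norm Q"
proof -
  have "norm Q ^ 2 < norm Q"
    using Q by (simp add: power2_eq_square)
  then show "norm Q ^ 2 < norm z"
    using z(1) by linarith
  show "norm Q ^ 2 < norm (Q * z)"
    using Q z(1) by (simp add: norm_mult power2_eq_square)
  show Qz: "norm (Q * z) < 1"
    using Q z(2) by (simp add: norm_mult field_simps)
  have "1 < 1 / norm Q"
    using Q by (simp add: field_simps)
  with Qz show "norm (Q * z) < 1 / norm Q"
    by linarith
qed

lemma norm_power_in_annulus:
  fixes q :: complex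
  assumes q: "norm q < 1" "q \<noteq> 0" and ab: "0 < a" "a \<le> b"
  shows "norm (q ^ b) ^ 2 < norm (q ^ a)" and "norm (q ^ a) < 1 / norm (q ^ b)"
proof -
  have nq: "0 < norm q"
    using q by simp
  have "norm q ^ (b * 2) < norm q ^ a"
    using ab q nq by (intro power_strict_decreasing) auto
  then show "norm (q ^ b) ^ 2 < norm (q ^ a)"
    by (simp add: norm_power power_mult)
  have "norm q ^ a * norm q ^ b < 1"
    using q nq ab by (simp add: power_add[symmetric] power_less_one_iff)
  then show "norm (q ^ a) < 1 / norm (q ^ b)"
    using nq by (simp add: norm_power pos_less_divide_eq)
qed

lemma constant_on_annulus_if_periodic:
  fixes h :: "complex \<Rightarrow> complex" and Q :: complex
  defines "U \<equiv> {z. norm Q ^ 2 < norm z \<and> norm z < 1 / norm Q}"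
  assumes Q: "0 < norm Q" "norm Q < 1" and holo: "h holomorphic_on U"
    and periodic: "\<And>z. norm Q < norm z \<Longrightarrow> norm z < 1 / norm Q \<Longrightarrow> norm z \<noteq> 1 \<Longrightarrow> h (Q * z) = h z"
  shows "h constant_on U"
proof -
  define A where "A = {z::complex. norm Q \<le> norm z \<and> norm z \<le> 1}"
  have "norm Q ^ 2 < norm Q" and "1 < 1 / norm Q"
    using Q by (simp_all add: power2_eq_square field_simps)
  then have AU: "A \<subseteq> U"
    unfolding A_def U_def by auto
  have "A = cball 0 1 - ball 0 (norm Q)"
    unfolding A_def by (auto simp: dist_norm)
  then have "compact A" by (auto intro!: compact_diff)
  moreover have "1 \<in> A"
    unfolding A_def using Q by simp
  moreover have "continuous_on A (\<lambda>z. norm (h z))"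
    by (intro continuous_intros holomorphic_on_imp_continuous_on holomorphic_on_subset[OF holo AU])
  ultimately obtain \<xi> where \<xi>: "\<xi> \<in> A" "\<And>z. z \<in> A \<Longrightarrow> norm (h z) \<le> norm (h \<xi>)"
    using continuous_attains_sup[of A "\<lambda>z. norm (h z)"] by blast
  \<comment> \<open>Multiplying by Q or 1/Q moves every point of U into A.\<close>
  have "norm (h w) \<le> norm (h \<xi>)" if "w \<in> U" for w
  proof -
    have w: "norm Q ^ 2 < norm w" "norm w < 1 / norm Q"
      using that unfolding U_def by auto
    consider "w \<in> A" | "1 < norm w" | "norm w < norm Q"
      unfolding A_def by force
    then show ?thesis
    proof cases
      case 2
      then have "h w = h (Q * w)" and "Q * w \<in> A"
        using periodic[of w] w Q unfolding A_def by (auto simp: norm_mult field_simps)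
      then show ?thesis using \<xi>(2) by simp
    next
      case 3
      then have "h w = h (w / Q)" and "w / Q \<in> A"
        using periodic[of "w / Q"] w Q unfolding A_def
        by (auto simp: norm_divide field_simps power2_eq_square)
      then show ?thesis using \<xi>(2) by simp
    qed (use \<xi> in auto)
  qed
  moreover have "open U"
    unfolding U_def by (intro open_Collect_conj open_Collect_less continuous_intros)
  moreover have "connected U"
    using connected_annulus(1)[of "norm Q ^ 2" "0::complex" "1 / norm Q"] unfolding U_def by simp
  ultimately show ?thesis
    using maximum_modulus_principle[OF holo _ _ _ order_refl] \<xi>(1) AU by blast
qed


section \<open>Jacobi's theta function\<close>

text \<open>For every integer n the product n (n - 1) is even and nonnegative, so \<open>nat\<close> loses nothing.\<close>
definition choose2 :: "int \<Rightarrow> nat" where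
  "choose2 n = nat (n * (n - 1) div 2)"

definition theta :: "complex \<Rightarrow> complex \<Rightarrow> complex" where
  "theta z Q = (\<Sum>\<^sub>\<infinity>n::int. z powi n * Q ^ choose2 n)"

definition half_theta :: "complex \<Rightarrow> complex \<Rightarrow> complex" where
  "half_theta Q w = (\<Sum>k. Q ^ (k choose 2) * w ^ k)"

lemma choose2_of_nat: "choose2 (int k) = k choose 2"
proof -
  have "int k * (int k - 1) = int (k * (k - 1))"
    by (cases k) (auto simp: algebra_simps)
  then show ?thesis
    by (simp add: choose2_def choose_two zdiv_int del: of_nat_mult)
qed

lemma choose2_neg: "choose2 (- int k - 1) = (k choose 2) + 2 * k + 1"
proof -
  obtain m where m: "k * (k - 1) = 2 * m"
    using evenE[of "k * (k - 1)"] by auto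
  have "(- int k - 1) * (- int k - 1 - 1) = int (2 * m) + 2 * (2 * int k + 1)"
    unfolding m[symmetric] by (cases k) (auto simp: algebra_simps)
  then show ?thesis
    using m by (simp add: choose2_def choose_two nat_add_distrib)
qed

lemma choose2_one_minus: "choose2 (1 - n) = choose2 n"
  unfolding choose2_def by (simp add: algebra_simps)

lemma power_choose2: "(Q :: 'a :: division_ring) ^ choose2 n = Q powi (n * (n - 1) div 2)"
proof -
  have "n * (n - 1) \<ge> 0"
    by (cases "n \<ge> 1") (auto simp: mult_nonpos_nonpos zero_le_mult_iff)
  then show ?thesis by (simp add: choose2_def power_int_def)
qed

lemma power2_power_choose2: "(Q^2) ^ choose2 n = (Q :: 'a :: division_ring) powi (n * (n - 1))"
proof -
  have "even (n * (n - 1))" by auto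
  then have "2 * (n * (n - 1) div 2) = n * (n - 1)" by simp
  then show ?thesis
    by (simp add: power_choose2 power_int_power)
qed

lemma power4_power_choose2: "(Q^4) ^ choose2 n = (Q :: 'a :: division_ring) powi (2 * (n * (n - 1)))"
proof -
  have "(Q^4) ^ choose2 n = ((Q^2)^2) ^ choose2 n"
    by (simp flip: power_mult)
  also have "\<dots> = Q powi (2 * (n * (n - 1)))"
    unfolding power2_power_choose2 by (simp add: power_int_power)
  finally show ?thesis .
qed

lemma summable_half_theta:
  fixes Q w :: complex
  assumes "norm Q < 1"
  shows "summable (\<lambda>k. norm (Q ^ (k choose 2) * w ^ k))"
proof -
  have "(\<lambda>k. norm Q ^ k * norm w) \<longlonglongrightarrow> 0 * norm w"
    by (intro tendsto_mult tendsto_const LIMSEQ_power_zero) (use assms in auto)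
  then have "eventually (\<lambda>k. norm Q ^ k * norm w < 1/2) sequentially"
    by (intro order_tendstoD) auto
  then obtain N where N: "\<And>k. k \<ge> N \<Longrightarrow> norm Q ^ k * norm w < 1/2"
    by (auto simp: eventually_sequentially)
  show ?thesis
  proof (rule summable_ratio_test[where c="1/2" and N=N])
    fix k assume "k \<ge> N"
    have "norm (Q ^ (Suc k choose 2) * w ^ Suc k)
        = (norm Q ^ k * norm w) * norm (Q ^ (k choose 2) * w ^ k)"
      by (simp add: numeral_2_eq_2 power_add norm_mult norm_power algebra_simps)
    also have "\<dots> \<le> 1/2 * norm (Q ^ (k choose 2) * w ^ k)"
      using N[OF \<open>k \<ge> N\<close>] by (intro mult_right_mono) auto
    finally show "norm (norm (Q ^ (Suc k choose 2) * w ^ Suc k))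
                    \<le> 1/2 * norm (norm (Q ^ (k choose 2) * w ^ k))"
      by simp
  qed simp
qed

lemma has_sum_theta_half_theta:
  fixes z Q :: complex
  assumes Q: "norm Q < 1" and z: "z \<noteq> 0"
  shows "((\<lambda>n. z powi n * Q ^ choose2 n)
           has_sum (half_theta Q z + (Q / z) * half_theta Q (Q^2 / z))) UNIV"
proof -
  have pos: "z powi int k * Q ^ choose2 (int k) = Q ^ (k choose 2) * z ^ k" for k
    by (simp add: choose2_of_nat)
  have "z powi (- int k - 1) = inverse z * inverse z ^ k" for k
    by (simp add: power_int_diff power_int_minus z field_simps)
  moreover have "Q ^ choose2 (- int k - 1) = Q * (Q ^ (k choose 2) * (Q^2) ^ k)" for k
    unfolding choose2_neg power_add power_mult by (simp add: mult_ac)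
  ultimately have neg: "z powi (- int k - 1) * Q ^ choose2 (- int k - 1)
                  = (Q / z) * (Q ^ (k choose 2) * (Q^2 / z) ^ k)" for k
    by (simp add: power_divide divide_inverse power_mult_distrib power_inverse mult_ac)
  have s1: "summable (\<lambda>k. norm (z powi int k * Q ^ choose2 (int k)))"
    unfolding pos by (rule summable_half_theta[OF Q])
  have s2: "summable (\<lambda>k. norm (z powi (- int k - 1) * Q ^ choose2 (- int k - 1)))"
    unfolding neg norm_mult[of "Q / z"]
    by (intro summable_mult) (rule summable_half_theta[OF Q])
  have e1: "(\<Sum>k. z powi int k * Q ^ choose2 (int k)) = half_theta Q z"
    unfolding pos half_theta_def ..
  have e2: "(\<Sum>k. z powi (- int k - 1) * Q ^ choose2 (- int k - 1)) = (Q / z) * half_theta Q (Q^2 / z)"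
    unfolding neg half_theta_def
    by (rule suminf_mult) (rule summable_norm_cancel[OF summable_half_theta[OF Q]])
  show ?thesis
    using has_sum_int_split[OF s1 s2] unfolding e1 e2 .
qed

lemma theta_eq_half_theta:
  "norm Q < 1 \<Longrightarrow> z \<noteq> 0 \<Longrightarrow> theta z Q = half_theta Q z + (Q / z) * half_theta Q (Q^2 / z)"
  unfolding theta_def by (rule infsumI) (rule has_sum_theta_half_theta)

lemma has_sum_theta:
  assumes "norm Q < 1" and "z \<noteq> 0"
  shows "((\<lambda>n. z powi n * Q ^ choose2 n) has_sum theta z Q) UNIV"
  unfolding theta_eq_half_theta[OF assms] by (rule has_sum_theta_half_theta[OF assms])

lemma half_theta_holomorphic:
  assumes "norm Q < 1"
  shows "half_theta Q holomorphic_on UNIV"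
proof -
  have ball: "half_theta Q holomorphic_on ball 0 R" for R
  proof (rule power_series_holomorphic[where a = "\<lambda>k. Q ^ (k choose 2)"])
    fix w :: complex
    have "(\<lambda>k. Q ^ (k choose 2) * w ^ k) sums half_theta Q w"
      unfolding half_theta_def
      by (rule summable_sums, rule summable_norm_cancel[OF summable_half_theta[OF assms]])
    then show "(\<lambda>k. Q ^ (k choose 2) * (w - 0) ^ k) sums half_theta Q w" by simp
  qed
  have "half_theta Q field_differentiable (at w)" for w
    using ball[of "norm w + 1"] by (rule holomorphic_on_imp_differentiable_at) auto
  then show ?thesis
    by (auto simp: holomorphic_on_def intro: field_differentiable_at_within)
qed

lemma holomorphic_on_half_theta [holomorphic_intros]:
  assumes "norm Q < 1" and "f holomorphic_on A"
  shows "(\<lambda>z. half_theta Q (f z)) holomorphic_on A"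
proof -
  have "(half_theta Q \<circ> f) holomorphic_on A"
    by (rule holomorphic_on_compose[OF assms(2)])
       (rule holomorphic_on_subset[OF half_theta_holomorphic[OF assms(1)]], auto)
  then show ?thesis by (simp add: o_def)
qed

lemma theta_holomorphic:
  assumes "norm Q < 1"
  shows "(\<lambda>z. theta z Q) holomorphic_on - {0}"
proof (rule holomorphic_transform)
  show "(\<lambda>z. half_theta Q z + (Q / z) * half_theta Q (Q^2 / z)) holomorphic_on - {0}"
    using assms by (intro holomorphic_intros) auto
qed (use theta_eq_half_theta[OF assms] in auto)

lemma minus_one_power_int_one_minus: "(-1 :: complex) powi (1 - n) = - ((-1) powi n)"
proof -
  have "(-1 :: complex) powi (1 - n) = (-1) powi 1 * (-1) powi (- n)"
    by (subst power_int_add[symmetric]) auto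
  then show ?thesis by (simp add: power_int_minus_one_minus)
qed

lemma theta_minus_one: "theta (-1) Q = 0"
proof -
  have "bij_betw (\<lambda>n::int. 1 - n) UNIV UNIV"
    by (rule bij_betwI[where g="\<lambda>n. 1 - n"]) auto
  then have "theta (-1) Q = (\<Sum>\<^sub>\<infinity>n. (-1) powi (1 - n) * Q ^ choose2 (1 - n))"
    unfolding theta_def by (rule infsum_reindex_bij_betw[symmetric])
  also have "\<dots> = - theta (-1) Q"
    by (simp add: theta_def choose2_one_minus minus_one_power_int_one_minus infsum_uminus)
  finally show ?thesis by simp
qed

lemma theta_shift:
  assumes "Q \<noteq> 0" and "z \<noteq> 0"
  shows "theta (Q * z) Q = theta z Q / z"
proof -
  have "(Q * z) powi n * Q ^ choose2 n = z powi (n + 1 - 1) * Q ^ choose2 (n + 1)" for n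
  proof -
    have "(n + 1) * (n + 1 - 1) div 2 = n + n * (n - 1) div 2"
      by (simp add: algebra_simps)
    then show ?thesis
      using assms by (simp add: power_choose2 power_int_mult_distrib power_int_add)
  qed
  moreover have "bij_betw (\<lambda>n::int. n + 1) UNIV UNIV"
    by (rule bij_betwI[where g="\<lambda>n. n - 1"]) auto
  ultimately have "theta (Q * z) Q = (\<Sum>\<^sub>\<infinity>m. z powi (m - 1) * Q ^ choose2 m)"
    unfolding theta_def
    using infsum_reindex_bij_betw[of "\<lambda>n. n + 1" UNIV UNIV "\<lambda>m. z powi (m - 1) * Q ^ choose2 m"]
    by simp
  also have "\<dots> = (\<Sum>\<^sub>\<infinity>m. z powi m * Q ^ choose2 m * inverse z)"
    using assms by (simp add: power_int_diff divide_inverse mult_ac)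
  finally show ?thesis
    by (simp add: theta_def infsum_cmult_left' divide_inverse)
qed

lemma theta_factor_zeros:
  assumes "norm Q < 1" and "Q \<noteq> 0"
  obtains g where "g holomorphic_on - {0}" and "\<And>z. theta z Q = (z + 1) * (z + Q) * g z"
proof -
  obtain g1 where g1: "g1 holomorphic_on - {0}" "\<And>z. theta z Q = (z - (-1)) * g1 z"
    using holomorphic_factor_zero[OF theta_holomorphic[OF assms(1)] _ theta_minus_one] by blast
  have "theta (-Q) Q = 0"
    using theta_shift[OF assms(2), of "-1"] theta_minus_one by simp
  moreover have "1 - Q \<noteq> 0"
    using assms(1) by auto
  ultimately have "g1 (-Q) = 0"
    using g1(2)[of "-Q"] by simp
  then obtain g2 where "g2 holomorphic_on - {0}" "\<And>z. g1 z = (z - (-Q)) * g2 z"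
    using holomorphic_factor_zero[OF g1(1)] by blast
  with g1(2) show ?thesis
    by (intro that[of g2]) (auto simp: mult_ac)
qed

lemma theta_dissection:
  fixes z Q :: complex
  assumes Q: "norm Q < 1" "Q \<noteq> 0" and z: "z \<noteq> 0"
  shows "theta z Q = theta (z^2 * Q) (Q^4) + z * theta (Q / z^2) (Q^4)"
proof -
  define f where "f = (\<lambda>n. z powi n * Q ^ choose2 n)"
  have Q4: "norm (Q^4) < 1"
    using Q by (simp add: norm_power power_less_one_iff)
  have exponent: "(2 * k) * (2 * k - 1) div 2 = k + 2 * (k * (k - 1))" for k :: int
    by (simp add: algebra_simps)
  have even: "f (2 * k) = (z^2 * Q) powi k * (Q^4) ^ choose2 k" for k
  proof -
    have "Q ^ choose2 (2 * k) = Q powi (k + 2 * (k * (k - 1)))"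
      by (simp only: power_choose2 exponent)
    then show ?thesis
      using assms unfolding f_def power4_power_choose2
      by (simp add: power_int_mult_distrib power_int_power power_int_add mult_ac)
  qed
  have odd: "f (1 - 2 * k) = z * ((Q / z^2) powi k * (Q^4) ^ choose2 k)" for k
  proof -
    have "z powi (1 - 2 * k) = z * (inverse z ^ 2) powi k"
      using z by (simp add: power_int_diff power_int_power power_int_inverse divide_inverse)
    then show ?thesis
      using even[of k] unfolding f_def choose2_one_minus
      by (simp add: power_int_mult_distrib power_int_divide_distrib power_int_power divide_inverse
                    power_int_inverse mult_ac)
  qed
  have "bij_betw (\<lambda>k::int. 2 * k) UNIV {n. even n}"
    by (rule bij_betwI[where g = "\<lambda>n. n div 2"]) auto
  moreover have "((\<lambda>k. f (2 * k)) has_sum theta (z^2 * Q) (Q^4)) UNIV"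
    unfolding even using Q4 Q z by (intro has_sum_theta) auto
  ultimately have "(f has_sum theta (z^2 * Q) (Q^4)) {n. even n}"
    using has_sum_reindex_bij_betw by blast
  moreover have "bij_betw (\<lambda>k::int. 1 - 2 * k) UNIV {n. odd n}"
    by (rule bij_betwI[where g = "\<lambda>n. (1 - n) div 2"]) (auto elim!: oddE)
  moreover have "((\<lambda>k. f (1 - 2 * k)) has_sum z * theta (Q / z^2) (Q^4)) UNIV"
    unfolding odd using Q4 Q z by (intro has_sum_cmult_right has_sum_theta) auto
  ultimately have "(f has_sum theta (z^2 * Q) (Q^4)) {n. even n}"
    and "(f has_sum z * theta (Q / z^2) (Q^4)) {n. odd n}"
    using has_sum_reindex_bij_betw by blast+
  then have "(f has_sum (theta (z^2 * Q) (Q^4) + z * theta (Q / z^2) (Q^4))) UNIV"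
    by (rule has_sum_UNIV_split) auto
  then show ?thesis
    unfolding theta_def f_def by (rule infsumI)
qed


section \<open>The triple product\<close>

lemma convergent_prod_one_plus_geometric:
  fixes Q c :: complex
  assumes "norm Q < 1"
  shows "convergent_prod (\<lambda>n. 1 + c * Q ^ n)"
proof -
  have "summable (\<lambda>n. norm (c * Q ^ n))"
    using assms by (auto simp: norm_mult norm_power intro!: summable_mult summable_geometric)
  then show ?thesis
    by (intro abs_convergent_prod_imp_convergent_prod summable_imp_abs_convergent_prod) simp
qed

lemma prodinf_one_plus_geometric_nonzero:
  fixes Q c :: complex
  assumes "norm Q < 1" and "norm c < 1"
  shows "(\<Prod>n. 1 + c * Q ^ n) \<noteq> 0"
proof (rule prodinf_nonzero[OF convergent_prod_one_plus_geometric[OF assms(1)]])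
  fix n
  have "norm (c * Q ^ n) \<le> norm c"
    using assms(1) by (simp add: norm_mult norm_power mult_left_le power_le_one)
  then show "1 + c * Q ^ n \<noteq> 0"
    using assms(2) by (intro one_add_nonzero_if_norm_less) simp
qed

lemma prodinf_one_plus_geometric_unfold:
  fixes Q c :: complex
  assumes "norm Q < 1"
  shows "(\<Prod>n. 1 + c * Q ^ n) = (1 + c) * (\<Prod>n. 1 + (c * Q) * Q ^ n)"
proof (cases "c = -1")
  case True
  have "(\<lambda>n. 1 + c * Q ^ n) has_prod (\<Prod>n. 1 + c * Q ^ n)"
    by (rule convergent_prod_has_prod[OF convergent_prod_one_plus_geometric[OF assms]])
  moreover have "0 \<in> range (\<lambda>n. 1 + c * Q ^ n)"
    using True by (auto intro!: image_eqI[of _ _ 0])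
  ultimately show ?thesis
    using True has_prod_eq_0_iff by fastforce
next
  case False
  then show ?thesis
    using prodinf_split_initial_segment[OF convergent_prod_one_plus_geometric[OF assms, of c], of 1]
    by (auto simp: add_eq_0_iff algebra_simps)
qed

lemma uniform_limit_prodinf_one_plus_geometric:
  fixes Q :: complex
  assumes Q: "norm Q < 1" and R: "R > 0"
  shows "uniform_limit (cball 0 R) (\<lambda>N w. \<Prod>n<N. 1 + w * Q ^ n) (\<lambda>w. \<Prod>n. 1 + w * Q ^ n) sequentially"
proof -
  define P where "P = (\<lambda>N w. \<Prod>n<N. 1 + w * Q ^ n)"
  have "uniformly_convergent_on (cball 0 R) P"
    unfolding P_def
  proof (rule uniformly_convergent_on_prod')
    have "uniform_limit (cball 0 R) (\<lambda>N w. \<Sum>n<N. norm (1 + w * Q ^ n - 1))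
            (\<lambda>w. \<Sum>n. norm (1 + w * Q ^ n - 1)) sequentially"
    proof (rule Weierstrass_m_test_ev[where M = "\<lambda>n. R * norm Q ^ n"])
      show "\<forall>\<^sub>F n in sequentially. \<forall>w\<in>cball 0 R. norm (norm (1 + w * Q ^ n - 1)) \<le> R * norm Q ^ n"
        by (intro always_eventually ballI) (auto simp: norm_mult norm_power intro!: mult_right_mono)
      show "summable (\<lambda>n. R * norm Q ^ n)"
        using Q by (intro summable_mult summable_geometric) auto
    qed
    then show "uniformly_convergent_on (cball 0 R) (\<lambda>N w. \<Sum>n<N. norm (1 + w * Q ^ n - 1))"
      by (auto simp: uniformly_convergent_on_def)
  qed (auto intro!: continuous_intros)
  then obtain g where g: "uniform_limit (cball 0 R) P g sequentially"
    by (auto simp: uniformly_convergent_on_def)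
  also have "?this \<longleftrightarrow> uniform_limit (cball 0 R) P (\<lambda>w. \<Prod>n. 1 + w * Q ^ n) sequentially"
  proof (intro uniform_limit_cong)
    fix w :: complex assume "w \<in> cball 0 R"
    with g have "(\<lambda>n. P (Suc n) w) \<longlonglongrightarrow> g w"
      by (metis tendsto_uniform_limitI filterlim_sequentially_Suc)
    moreover have "(\<lambda>n. P (Suc n) w) \<longlonglongrightarrow> (\<Prod>n. 1 + w * Q ^ n)"
      using convergent_prod_LIMSEQ[OF convergent_prod_one_plus_geometric[OF Q, of w]]
      unfolding P_def lessThan_Suc_atMost .
    ultimately show "g w = (\<Prod>n. 1 + w * Q ^ n)"
      using tendsto_unique by force
  qed auto
  finally show ?thesis
    unfolding P_def .
qed

lemma prodinf_one_plus_geometric_holomorphic: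
  fixes Q :: complex
  assumes Q: "norm Q < 1"
  shows "(\<lambda>w. \<Prod>n. 1 + w * Q ^ n) holomorphic_on UNIV"
proof (rule holomorphic_uniform_sequence[where f = "\<lambda>N w. \<Prod>n<N. 1 + w * Q ^ n"])
  fix z :: complex
  have "uniform_limit (cball 0 (norm z + 1)) (\<lambda>N w. \<Prod>n<N. 1 + w * Q ^ n) (\<lambda>w. \<Prod>n. 1 + w * Q ^ n) sequentially"
    by (rule uniform_limit_prodinf_one_plus_geometric[OF Q]) (auto intro: add_nonneg_pos)
  then have "uniform_limit (cball z 1) (\<lambda>N w. \<Prod>n<N. 1 + w * Q ^ n) (\<lambda>w. \<Prod>n. 1 + w * Q ^ n) sequentially"
    by (rule uniform_limit_on_subset) (simp add: cball_subset_cball_iff)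
  then show "\<exists>d>0. cball z d \<subseteq> UNIV
               \<and> uniform_limit (cball z d) (\<lambda>N w. \<Prod>n<N. 1 + w * Q ^ n) (\<lambda>w. \<Prod>n. 1 + w * Q ^ n) sequentially"
    by (intro exI[of _ 1]) auto
qed (auto intro!: holomorphic_intros)

lemma holomorphic_on_prodinf_one_plus_geometric [holomorphic_intros]:
  fixes Q :: complex
  assumes "norm Q < 1" and "f holomorphic_on A"
  shows "(\<lambda>z. \<Prod>n. 1 + f z * Q ^ n) holomorphic_on A"
proof -
  have "((\<lambda>w. \<Prod>n. 1 + w * Q ^ n) \<circ> f) holomorphic_on A"
    by (rule holomorphic_on_compose[OF assms(2)])
       (rule holomorphic_on_subset[OF prodinf_one_plus_geometric_holomorphic[OF assms(1)]], auto)
  then show ?thesis by (simp add: o_def)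
qed

definition triple_prod :: "complex \<Rightarrow> complex \<Rightarrow> complex" where
  "triple_prod z Q = (\<Prod>n. 1 + z * Q ^ n) * (\<Prod>n. 1 + (Q / z) * Q ^ n)"

lemma triple_prod_shift:
  assumes "norm Q < 1" and "Q \<noteq> 0" and "z \<noteq> 0"
  shows "triple_prod (Q * z) Q = triple_prod z Q / z"
proof -
  define A where "A = (\<Prod>n. 1 + (z * Q) * Q ^ n)"
  define B where "B = (\<Prod>n. 1 + (Q / z) * Q ^ n)"
  have "triple_prod z Q = (1 + z) * A * B"
    unfolding triple_prod_def A_def B_def by (subst prodinf_one_plus_geometric_unfold[OF assms(1)]) simp
  moreover have "triple_prod (Q * z) Q = A * ((1 + 1 / z) * B)"
    unfolding triple_prod_def A_def B_def
    by (subst prodinf_one_plus_geometric_unfold[OF assms(1), of "Q / (Q * z)"])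
       (use assms in \<open>simp add: field_simps\<close>)
  ultimately show ?thesis
    using assms by (simp add: field_simps)
qed

lemma triple_prod_nonzero:
  assumes "norm Q < 1" and "norm z < 1" and "norm (Q / z) < 1"
  shows "triple_prod z Q \<noteq> 0"
proof -
  have "(\<Prod>n. 1 + z * Q ^ n) \<noteq> 0" and "(\<Prod>n. 1 + (Q / z) * Q ^ n) \<noteq> 0"
    using prodinf_one_plus_geometric_nonzero[OF assms(1)] assms(2,3) by blast+
  then show ?thesis
    unfolding triple_prod_def by (rule no_zero_divisors)
qed

lemma triple_prod_factor_zeros:
  fixes Q :: complex
  assumes Q: "norm Q < 1" "Q \<noteq> 0"
  obtains T where "T holomorphic_on - {0}"
    and "\<And>z. z \<noteq> 0 \<Longrightarrow> triple_prod z Q = (z + 1) * (z + Q) / z * T z"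
    and "\<And>z. norm Q ^ 2 < norm z \<Longrightarrow> norm z < 1 / norm Q \<Longrightarrow> T z \<noteq> 0"
proof
  define T where "T = (\<lambda>z. (\<Prod>n. 1 + (Q * z) * Q ^ n) * (\<Prod>n. 1 + (Q^2 / z) * Q ^ n))"
  show "T holomorphic_on - {0}"
    unfolding T_def using Q(1) by (intro holomorphic_intros) auto
  show "triple_prod z Q = (z + 1) * (z + Q) / z * T z" if "z \<noteq> 0" for z
  proof -
    have "triple_prod z Q = ((1 + z) * (\<Prod>n. 1 + (z * Q) * Q ^ n))
                            * ((1 + Q / z) * (\<Prod>n. 1 + (Q / z * Q) * Q ^ n))"
      unfolding triple_prod_def by (subst (1 2) prodinf_one_plus_geometric_unfold[OF Q(1)]) simp
    then show ?thesis
      unfolding T_def using that by (simp add: field_simps power2_eq_square)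
  qed
  show "T z \<noteq> 0" if z: "norm Q ^ 2 < norm z" "norm z < 1 / norm Q" for z
  proof -
    have "0 < norm z"
      using z(1) by (metis le_less_trans zero_le_power2)
    have "norm (Q * z) < 1"
      using z(2) Q by (simp add: norm_mult field_simps)
    moreover have "norm (Q^2 / z) < 1"
      using z(1) \<open>0 < norm z\<close> by (simp add: norm_divide norm_power)
    ultimately show ?thesis
      unfolding T_def by (intro no_zero_divisors prodinf_one_plus_geometric_nonzero[OF Q(1)])
  qed
qed

lemma tendsto_triple_prod_blocks:
  fixes z Q :: complex
  assumes "norm Q < 1" and "k > 0"
  shows "(\<lambda>m. \<Prod>j<m. \<Prod>i<k. (1 + z * Q ^ (k * j + i)) * (1 + (Q / z) * Q ^ (k * j + i)))
           \<longlonglongrightarrow> triple_prod z Q"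
proof -
  have "(\<lambda>m. (\<Prod>j<m. \<Prod>i<k. 1 + z * Q ^ (k * j + i)) * (\<Prod>j<m. \<Prod>i<k. 1 + (Q / z) * Q ^ (k * j + i)))
          \<longlonglongrightarrow> triple_prod z Q"
    unfolding triple_prod_def using assms
    by (intro tendsto_mult has_prod_tendsto_blocks convergent_prod_has_prod
              convergent_prod_one_plus_geometric)
  then show ?thesis
    by (simp add: prod.distrib)
qed


section \<open>Jacobi's triple product identity\<close>

lemma theta_eq_holomorphic_mult_triple_prod:
  fixes Q :: complex
  assumes Q: "norm Q < 1" "Q \<noteq> 0"
  defines "U \<equiv> {z. norm Q ^ 2 < norm z \<and> norm z < 1 / norm Q}"
  obtains h where "h holomorphic_on U"
    and "\<And>z. z \<in> U \<Longrightarrow> theta z Q = h z * triple_prod z Q"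
    and "\<And>z. z \<in> U \<Longrightarrow> z \<noteq> -1 \<Longrightarrow> z \<noteq> -Q \<Longrightarrow> triple_prod z Q \<noteq> 0"
proof -
  have U0: "z \<in> U \<Longrightarrow> z \<noteq> 0" for z
    unfolding U_def by auto
  obtain g where g: "g holomorphic_on - {0}" "\<And>z. theta z Q = (z + 1) * (z + Q) * g z"
    using theta_factor_zeros[OF Q] by blast
  obtain T where T: "T holomorphic_on - {0}" "\<And>z. z \<noteq> 0 \<Longrightarrow> triple_prod z Q = (z + 1) * (z + Q) / z * T z"
    and "\<And>z. norm Q ^ 2 < norm z \<Longrightarrow> norm z < 1 / norm Q \<Longrightarrow> T z \<noteq> 0"
    using triple_prod_factor_zeros[OF Q] by blast
  then have T_nonzero: "z \<in> U \<Longrightarrow> T z \<noteq> 0" for z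
    unfolding U_def by blast
  show ?thesis
  proof
    show "(\<lambda>z. z * g z / T z) holomorphic_on U"
      by (intro holomorphic_intros holomorphic_on_subset[OF g(1)] holomorphic_on_subset[OF T(1)])
         (use U0 T_nonzero in auto)
    show "theta z Q = z * g z / T z * triple_prod z Q" if "z \<in> U" for z
      using U0[OF that] T_nonzero[OF that] by (simp add: g(2) T(2))
    show "triple_prod z Q \<noteq> 0" if "z \<in> U" "z \<noteq> -1" "z \<noteq> -Q" for z
      using that U0[OF that(1)] T_nonzero[OF that(1)] by (simp add: T(2) add_eq_0_iff2)
  qed
qed

lemma annulus_shift_avoids_zeros:
  fixes Q z :: complex
  assumes "Q \<noteq> 0" "norm Q < norm z" "norm (Q * z) < 1" "norm z \<noteq> 1"
  shows "z \<noteq> -1" and "z \<noteq> -Q" and "Q * z \<noteq> -1" and "Q * z \<noteq> -Q"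
proof -
  show "z \<noteq> -1" "z \<noteq> -Q" "Q * z \<noteq> -1"
    using assms(2-4) by auto
  show "Q * z \<noteq> -Q"
  proof
    assume "Q * z = -Q"
    then have "Q * (z + 1) = 0"
      by (simp add: distrib_left)
    with assms(1,4) show False
      by (auto simp: add_eq_0_iff2)
  qed
qed

lemma theta_eq_const_mult_triple_prod:
  fixes Q :: complex
  assumes Q: "norm Q < 1" "Q \<noteq> 0"
  obtains c where
    "\<And>z. norm Q ^ 2 < norm z \<Longrightarrow> norm z < 1 / norm Q \<Longrightarrow> theta z Q = c * triple_prod z Q"
proof -
  define U where "U = {z::complex. norm Q ^ 2 < norm z \<and> norm z < 1 / norm Q}"
  obtain h where h: "h holomorphic_on U" "\<And>z. z \<in> U \<Longrightarrow> theta z Q = h z * triple_prod z Q"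
    and nonzero: "\<And>z. z \<in> U \<Longrightarrow> z \<noteq> -1 \<Longrightarrow> z \<noteq> -Q \<Longrightarrow> triple_prod z Q \<noteq> 0"
    using theta_eq_holomorphic_mult_triple_prod[OF Q] unfolding U_def by blast
  have "h constant_on U"
    unfolding U_def
  proof (rule constant_on_annulus_if_periodic)
    show Q': "0 < norm Q" "norm Q < 1"
      using Q by auto
    show "h holomorphic_on {z. norm Q ^ 2 < norm z \<and> norm z < 1 / norm Q}"
      using h(1) unfolding U_def .
    fix z :: complex
    assume z: "norm Q < norm z" "norm z < 1 / norm Q" "norm z \<noteq> 1"
    have zU: "z \<in> U" and QzU: "Q * z \<in> U" and Qz: "norm (Q * z) < 1"
      using annulus_shift[OF Q' z(1,2)] z(2) unfolding U_def by auto
    have "z \<noteq> -1" "z \<noteq> -Q" "Q * z \<noteq> -1" "Q * z \<noteq> -Q"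
      using annulus_shift_avoids_zeros[OF Q(2) z(1) Qz z(3)] .
    then have "triple_prod z Q \<noteq> 0" and "triple_prod (Q * z) Q \<noteq> 0"
      using zU QzU by (simp_all add: nonzero)
    moreover have z0: "z \<noteq> 0"
      using zU unfolding U_def by auto
    ultimately show "h (Q * z) = h z"
      using h(2)[OF zU] h(2)[OF QzU] theta_shift[OF Q(2) z0] triple_prod_shift[OF Q z0] by simp
  qed
  then obtain c where "\<And>z. z \<in> U \<Longrightarrow> h z = c"
    unfolding constant_on_def by blast
  with h(2) show ?thesis
    using that unfolding U_def by auto
qed

definition theta3 :: "complex \<Rightarrow> complex" where
  "theta3 q = (\<Sum>\<^sub>\<infinity>n::int. q powi (n * n))"

text \<open>The classical theta2 without its factor q^(1/4).\<close>
definition theta2 :: "complex \<Rightarrow> complex" where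
  "theta2 q = (\<Sum>\<^sub>\<infinity>n::int. q powi (n * n + n))"

lemma has_sum_theta3:
  assumes "norm q < 1" and "q \<noteq> 0"
  shows "((\<lambda>n. q powi (n * n)) has_sum theta3 q) UNIV" and "theta3 q = theta q (q^2)"
proof -
  have "norm (q^2) < 1"
    using assms by (simp add: norm_power power_less_one_iff)
  moreover have "q powi n * (q^2) ^ choose2 n = q powi (n * n)" for n
    using assms(2) by (simp add: power2_power_choose2 power_int_add[symmetric] algebra_simps)
  ultimately have "((\<lambda>n. q powi (n * n)) has_sum theta q (q^2)) UNIV"
    using has_sum_theta[of "q^2" q] assms(2) by simp
  then show "theta3 q = theta q (q^2)"
    unfolding theta3_def by (rule infsumI)
  with \<open>((\<lambda>n. q powi (n * n)) has_sum theta q (q^2)) UNIV\<close>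
  show "((\<lambda>n. q powi (n * n)) has_sum theta3 q) UNIV" by simp
qed

lemma has_sum_theta2:
  assumes "norm q < 1" and "q \<noteq> 0"
  shows "((\<lambda>n. q powi (n * n + n)) has_sum theta2 q) UNIV" and "theta2 q = theta (q^2) (q^2)"
proof -
  have "norm (q^2) < 1"
    using assms by (simp add: norm_power power_less_one_iff)
  moreover have "(q^2) powi n * (q^2) ^ choose2 n = q powi (n * n + n)" for n
    using assms(2) by (simp add: power2_power_choose2 power_int_power power_int_add[symmetric] algebra_simps)
  ultimately have "((\<lambda>n. q powi (n * n + n)) has_sum theta (q^2) (q^2)) UNIV"
    using has_sum_theta[of "q^2" "q^2"] assms(2) by simp
  then show "theta2 q = theta (q^2) (q^2)"
    unfolding theta2_def by (rule infsumI)
  with \<open>((\<lambda>n. q powi (n * n + n)) has_sum theta (q^2) (q^2)) UNIV\<close>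
  show "((\<lambda>n. q powi (n * n + n)) has_sum theta2 q) UNIV" by simp
qed

lemma bij_betw_sum_diff_even:
  "bij_betw (\<lambda>(i::int, j::int). (i + j, i - j)) UNIV {(m, n). even (m + n)}"
  by (rule bij_betwI[where g = "\<lambda>(m, n). ((m + n) div 2, (m - n) div 2)"]) (auto, presburger+)

lemma bij_betw_sum_diff_odd:
  "bij_betw (\<lambda>(i::int, j::int). (i + j + 1, i - j)) UNIV {(m, n). odd (m + n)}"
  by (rule bij_betwI[where g = "\<lambda>(m, n). ((m + n - 1) div 2, (m - n) div 2)"]) (auto, presburger+)

lemma bij_betw_sum_diff_odd':
  "bij_betw (\<lambda>(i::int, j::int). (i + j, i - j - 1)) UNIV {(m, n). odd (m + n)}"
  by (rule bij_betwI[where g = "\<lambda>(m, n). ((m + n + 1) div 2, (m - n - 1) div 2)"]) (auto, presburger+)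

lemma parity_partition:
  "{(m::int, n::int). even (m + n)} \<inter> {(m, n). odd (m + n)} = {}"
  "{(m::int, n::int). even (m + n)} \<union> {(m, n). odd (m + n)} = UNIV"
  by auto

lemma theta3_duplication:
  fixes q :: complex
  assumes q: "norm q < 1" "q \<noteq> 0"
  shows "theta3 q ^ 2 = theta3 (q^2) ^ 2 + q * theta2 (q^2) ^ 2"
proof -
  have q2: "norm (q^2) < 1" "q^2 \<noteq> 0"
    using q by (auto simp: norm_power power_less_one_iff)
  define F where "F = (\<lambda>(m::int, n::int). q powi (m * m) * q powi (n * n))"
  have "(F has_sum (theta3 q * theta3 q)) UNIV"
    using has_sum_mult_complex[OF has_sum_theta3(1)[OF q] has_sum_theta3(1)[OF q]]
    by (simp add: F_def)
  moreover have "(F has_sum (theta3 (q^2) * theta3 (q^2) + q * (theta2 (q^2) * theta2 (q^2)))) UNIV"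
  proof (rule has_sum_UNIV_split[OF _ _ parity_partition])
    have "(q^2) powi (i * i) * (q^2) powi (j * j) = F (i + j, i - j)" for i j
      using q(2) by (simp add: F_def power_int_power power_int_add[symmetric] algebra_simps)
    then show "(F has_sum (theta3 (q^2) * theta3 (q^2))) {(m, n). even (m + n)}"
      using has_sum_mult_complex[OF has_sum_theta3(1)[OF q2] has_sum_theta3(1)[OF q2]]
            has_sum_reindex_bij_betw[OF bij_betw_sum_diff_even, of F]
      by (simp add: case_prod_unfold)
    have "q * ((q^2) powi (i * i + i) * (q^2) powi (j * j + j)) = F (i + j + 1, i - j)" for i j
    proof -
      have "q * ((q^2) powi (i * i + i) * (q^2) powi (j * j + j))
            = q powi (1 + (2 * (i * i + i) + 2 * (j * j + j)))"
        using q(2) by (simp add: power_int_power power_int_add)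
      also have "\<dots> = F (i + j + 1, i - j)"
        using q(2) by (simp add: F_def power_int_add[symmetric] algebra_simps)
      finally show ?thesis .
    qed
    then show "(F has_sum (q * (theta2 (q^2) * theta2 (q^2)))) {(m, n). odd (m + n)}"
      using has_sum_cmult_right[OF has_sum_mult_complex[OF has_sum_theta2(1)[OF q2]
              has_sum_theta2(1)[OF q2]], of q]
            has_sum_reindex_bij_betw[OF bij_betw_sum_diff_odd, of F]
      by (simp add: case_prod_unfold)
  qed
  ultimately show ?thesis
    using has_sum_unique by (fastforce simp: power2_eq_square)
qed

lemma theta2_duplication:
  fixes q :: complex
  assumes q: "norm q < 1" "q \<noteq> 0"
  shows "theta2 q ^ 2 = 2 * theta2 (q^2) * theta3 (q^2)"
proof -
  have q2: "norm (q^2) < 1" "q^2 \<noteq> 0"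
    using q by (auto simp: norm_power power_less_one_iff)
  define F where "F = (\<lambda>(m::int, n::int). q powi (m * m + m) * q powi (n * n + n))"
  have "(F has_sum (theta2 q * theta2 q)) UNIV"
    using has_sum_mult_complex[OF has_sum_theta2(1)[OF q] has_sum_theta2(1)[OF q]]
    by (simp add: F_def)
  moreover have "(F has_sum (theta2 (q^2) * theta3 (q^2) + theta3 (q^2) * theta2 (q^2))) UNIV"
  proof (rule has_sum_UNIV_split[OF _ _ parity_partition])
    have "(q^2) powi (i * i + i) * (q^2) powi (j * j) = F (i + j, i - j)" for i j
      using q(2) by (simp add: F_def power_int_power power_int_add[symmetric] algebra_simps)
    then show "(F has_sum (theta2 (q^2) * theta3 (q^2))) {(m, n). even (m + n)}"
      using has_sum_mult_complex[OF has_sum_theta2(1)[OF q2] has_sum_theta3(1)[OF q2]]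
            has_sum_reindex_bij_betw[OF bij_betw_sum_diff_even, of F]
      by (simp add: case_prod_unfold)
    have "(q^2) powi (i * i) * (q^2) powi (j * j + j) = F (i + j, i - j - 1)" for i j
      using q(2) by (simp add: F_def power_int_power power_int_add[symmetric] algebra_simps)
    then show "(F has_sum (theta3 (q^2) * theta2 (q^2))) {(m, n). odd (m + n)}"
      using has_sum_mult_complex[OF has_sum_theta3(1)[OF q2] has_sum_theta2(1)[OF q2]]
            has_sum_reindex_bij_betw[OF bij_betw_sum_diff_odd', of F]
      by (simp add: case_prod_unfold)
  qed
  ultimately show ?thesis
    using has_sum_unique by (fastforce simp: power2_eq_square)
qed

lemma half_theta_approx:
  fixes Q w :: complex
  assumes Q: "norm Q < 1" and w: "norm w < 1"
  shows "norm (half_theta Q w - 1) \<le> norm w / (1 - norm w)"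
proof -
  define f where "f = (\<lambda>k. Q ^ (k choose 2) * w ^ k)"
  have sfn: "summable (\<lambda>k. norm (f k))"
    unfolding f_def by (rule summable_half_theta[OF Q])
  then have sf: "summable f"
    by (rule summable_norm_cancel)
  have sfS: "summable (\<lambda>k. norm (f (Suc k)))"
    using summable_Suc_iff[of "\<lambda>k. norm (f k)"] sfn by simp
  have "norm (half_theta Q w - 1) = norm (\<Sum>k. f (Suc k))"
    using suminf_split_head[OF sf] unfolding half_theta_def f_def by (simp add: binomial_eq_0)
  also have "\<dots> \<le> (\<Sum>k. norm (f (Suc k)))"
    by (rule summable_norm[OF sfS])
  also have "\<dots> \<le> (\<Sum>k. norm w ^ Suc k)"
  proof (rule suminf_le)
    show "norm (f (Suc k)) \<le> norm w ^ Suc k" for k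
      unfolding f_def using Q
      by (simp add: norm_mult norm_power mult_left_le_one_le power_le_one del: power_Suc)
    show "summable (\<lambda>k. norm w ^ Suc k)"
      using w by (simp add: summable_Suc_iff)
  qed (rule sfS)
  also have "\<dots> = norm w * (\<Sum>k. norm w ^ k)"
    by (subst suminf_mult[symmetric]) (use w in auto)
  also have "\<dots> = norm w / (1 - norm w)"
    using w by (simp add: suminf_geometric)
  finally show ?thesis .
qed

lemma theta3_nonzero_if_small:
  fixes q :: complex
  assumes q: "norm q \<le> 1/4" "q \<noteq> 0"
  shows "theta3 q \<noteq> 0"
proof
  assume zero: "theta3 q = 0"
  have nq: "norm q < 1"
    using q by simp
  have Q: "norm (q^2) < 1"
    using nq by (simp add: norm_power power_less_one_iff)
  have "q^2 / q = q" and "(q^2)^2 / q = q^3"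
    using q(2) by (simp_all add: power2_eq_square power3_eq_cube)
  then have "theta3 q = half_theta (q^2) q + q * half_theta (q^2) (q^3)"
    using theta_eq_half_theta[OF Q q(2)] has_sum_theta3(2)[OF nq q(2)] by simp
  with zero have one: "(1 - half_theta (q^2) q) - q * half_theta (q^2) (q^3) = 1"
    by (simp add: diff_diff_eq)
  from norm_triangle_ineq4[of "1 - half_theta (q^2) q" "q * half_theta (q^2) (q^3)"]
  have sum_ge: "1 \<le> norm (1 - half_theta (q^2) q) + norm (q * half_theta (q^2) (q^3))"
    unfolding one norm_one .
  have small: "norm (half_theta (q^2) w - 1) \<le> 1/3" if "norm w \<le> 1/4" for w
  proof -
    have "norm (half_theta (q^2) w - 1) \<le> norm w / (1 - norm w)"
      by (rule half_theta_approx[OF Q]) (use that in simp)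
    also have "\<dots> \<le> 1/3"
      using that by (simp add: field_simps)
    finally show ?thesis .
  qed
  then have "norm (1 - half_theta (q^2) q) \<le> 1/3"
    using q(1) by (simp add: norm_minus_commute)
  moreover have "norm (q * half_theta (q^2) (q^3)) \<le> 1/3"
  proof -
    have "norm (q^3) \<le> norm q"
      using power_decreasing[of 1 3 "norm q"] nq by (simp add: norm_power)
    then have "norm (half_theta (q^2) (q^3)) \<le> 4/3"
      using small[of "q^3"] q(1) norm_triangle_ineq2[of "half_theta (q^2) (q^3)" 1] by simp
    then have "norm q * norm (half_theta (q^2) (q^3)) \<le> 1/4 * (4/3)"
      using q(1) by (intro mult_mono) auto
    then show ?thesis
      by (simp add: norm_mult)
  qed
  ultimately show False
    using sum_ge by simp
qed

lemma theta3_theta2_not_both_zero: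
  fixes q :: complex
  assumes q: "norm q < 1" "q \<noteq> 0"
  shows "theta3 q \<noteq> 0 \<or> theta2 q \<noteq> 0"
proof (rule ccontr)
  assume "\<not> (theta3 q \<noteq> 0 \<or> theta2 q \<noteq> 0)"
  then have zero: "theta3 (q ^ 2 ^ k) = 0 \<and> theta2 (q ^ 2 ^ k) = 0" for k
  proof (induction k)
    case (Suc k)
    define p where "p = q ^ 2 ^ k"
    have p: "norm p < 1" "p \<noteq> 0"
      using q by (auto simp: p_def norm_power power_less_one_iff)
    have "theta3 (p^2) ^ 2 + p * theta2 (p^2) ^ 2 = 0" and "theta2 (p^2) * theta3 (p^2) = 0"
      using theta3_duplication[OF p] theta2_duplication[OF p] Suc by (simp_all add: p_def)
    moreover have "q ^ 2 ^ Suc k = p^2"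
      by (simp add: p_def power_mult[symmetric] mult.commute)
    ultimately show ?case
      using p(2) by auto
  qed simp
  have "(\<lambda>n. norm q ^ n) \<longlonglongrightarrow> 0"
    using q by (intro LIMSEQ_power_zero) auto
  then have "eventually (\<lambda>n. norm q ^ n < 1/4) sequentially"
    by (intro order_tendstoD) auto
  then obtain N where "norm q ^ N < 1/4"
    by (auto simp: eventually_sequentially)
  moreover have "norm (q ^ 2 ^ N) \<le> norm q ^ N"
    unfolding norm_power using q(1) by (intro power_decreasing less_imp_le[OF less_exp]) auto
  ultimately have "theta3 (q ^ 2 ^ N) \<noteq> 0"
    using q(2) by (intro theta3_nonzero_if_small) auto
  with zero show False
    by blast
qed

theorem jacobi_triple_product:
  fixes Q :: complex
  assumes Q: "norm Q < 1" "Q \<noteq> 0"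
  obtains c where "c \<noteq> 0"
    and "\<And>z. norm Q ^ 2 < norm z \<Longrightarrow> norm z < 1 / norm Q \<Longrightarrow> theta z Q = c * triple_prod z Q"
proof -
  obtain c where c: "\<And>z. norm Q ^ 2 < norm z \<Longrightarrow> norm z < 1 / norm Q \<Longrightarrow> theta z Q = c * triple_prod z Q"
    using theta_eq_const_mult_triple_prod[OF Q] by blast
  have "c \<noteq> 0"
  proof
    assume "c = 0"
    define q where "q = csqrt Q"
    have q: "q^2 = Q" "norm q = sqrt (norm Q)" "norm q < 1" "q \<noteq> 0"
      using Q by (auto simp: q_def)
    have "norm Q * norm Q < 1 * 1"
      using Q by (intro mult_strict_mono) auto
    then have nQ: "norm Q ^ 2 < norm Q" "norm Q < 1 / norm Q"
      using Q by (auto simp: power2_eq_square field_simps)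
    moreover have "norm Q \<le> sqrt (norm Q)" and "sqrt (norm Q) < 1 / norm Q"
    proof -
      have "sqrt (norm Q) < 1" and "1 < 1 / norm Q"
        using Q by (auto simp: field_simps)
      then show "sqrt (norm Q) < 1 / norm Q"
        by linarith
    qed (use Q in \<open>auto simp: real_le_rsqrt power2_eq_square mult_le_one\<close>)
    ultimately have "theta q Q = 0" and "theta Q Q = 0"
      using c[of q] c[of Q] \<open>c = 0\<close> q(2) by auto
    then have "theta3 q = 0" and "theta2 q = 0"
      using has_sum_theta3(2)[OF q(3,4)] has_sum_theta2(2)[OF q(3,4)] q(1) by auto
    with theta3_theta2_not_both_zero[OF q(3,4)] show False
      by blast
  qed
  with c show ?thesis
    using that by blast
qed


section \<open>The modular equation for u\<close>

lemma qpow_add: "qpow a \<tau> * qpow b \<tau> = qpow (a + b) \<tau>"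
  by (simp add: qpow_def exp_add[symmetric] algebra_simps)

lemma qpow_double_arg: "qpow r (2 * \<tau>) = qpow (2 * r) \<tau>"
  by (simp add: qpow_def algebra_simps)

lemma qpow_power2: "qpow r \<tau> ^ 2 = qpow (2 * r) \<tau>"
  by (simp add: power2_eq_square qpow_add)

lemma norm_qpow_one_less: "Im \<tau> > 0 \<Longrightarrow> norm (qpow 1 \<tau>) < 1"
  by (simp add: qpow_def norm_exp_eq_Re)

lemma qpow_nonzero: "qpow r \<tau> \<noteq> 0"
  by (simp add: qpow_def)

lemma prodinf_powi_alternating:
  fixes q :: complex
  assumes q: "norm q < 1"
  shows "(\<Prod>n. (1 + q ^ (n + 1)) powi ((-1) ^ (n + 1)))
           = (\<Prod>n. 1 + q^2 * (q^2) ^ n) / (\<Prod>n. 1 + q * (q^2) ^ n)"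
proof -
  define g where "g = (\<lambda>n::nat. (1 + q ^ (n + 1)) powi ((-1) ^ (n + 1) :: int))"
  have Q: "norm (q^2) < 1"
    using q by (simp add: norm_power power_less_one_iff)
  have "convergent_prod g"
    using convergent_prod_powi_sign[OF q, of 1 "\<lambda>n. (-1) ^ (n + 1)"]
    by (simp add: g_def minus_one_power_iff)
  then have "(\<lambda>m. \<Prod>j<m. \<Prod>i<2. g (2 * j + i)) \<longlonglongrightarrow> prodinf g"
    by (intro has_prod_tendsto_blocks convergent_prod_has_prod) auto
  moreover have "(\<Prod>i<2. g (2 * j + i)) = (1 + q^2 * (q^2) ^ j) / (1 + q * (q^2) ^ j)" for j
  proof -
    have sq: "(q^2) ^ j = q ^ (2 * j)"
      by (simp add: power_mult)
    have "q ^ (2 * j + 1) = q * (q^2) ^ j" and "q ^ (2 * j + 1 + 1) = q^2 * (q^2) ^ j"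
      unfolding sq by (simp_all add: power_add power2_eq_square mult_ac)
    then have "g (2 * j) = inverse (1 + q * (q^2) ^ j)" and "g (2 * j + 1) = 1 + q^2 * (q^2) ^ j"
      by (simp_all add: g_def)
    moreover have "(\<Prod>i<2. h i) = h 0 * h 1" for h :: "nat \<Rightarrow> complex"
      by (simp add: numeral_2_eq_2)
    ultimately show ?thesis
      by (simp add: divide_inverse mult.commute)
  qed
  ultimately have "(\<lambda>m. (\<Prod>j<m. 1 + q^2 * (q^2) ^ j) / (\<Prod>j<m. 1 + q * (q^2) ^ j)) \<longlonglongrightarrow> prodinf g"
    by (simp add: prod_dividef)
  moreover have "(\<lambda>m. (\<Prod>j<m. 1 + q^2 * (q^2) ^ j) / (\<Prod>j<m. 1 + q * (q^2) ^ j))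
                   \<longlonglongrightarrow> (\<Prod>n. 1 + q^2 * (q^2) ^ n) / (\<Prod>n. 1 + q * (q^2) ^ n)"
    using prodinf_one_plus_geometric_nonzero[OF Q, of q] q
    by (intro tendsto_divide has_prod_imp_tendsto' convergent_prod_has_prod
              convergent_prod_one_plus_geometric Q) auto
  ultimately show ?thesis
    unfolding g_def by (rule LIMSEQ_unique)
qed

lemma theta2_div_theta3:
  fixes q :: complex
  assumes q: "norm q < 1" "q \<noteq> 0"
  shows "theta3 q \<noteq> 0"
    and "theta2 q / theta3 q = 2 * ((\<Prod>n. 1 + q^2 * (q^2) ^ n) / (\<Prod>n. 1 + q * (q^2) ^ n)) ^ 2"
proof -
  define A where "A = (\<Prod>n. 1 + q * (q^2) ^ n)"
  define B where "B = (\<Prod>n. 1 + q^2 * (q^2) ^ n)"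
  have Q: "norm (q^2) < 1" "q^2 \<noteq> 0"
    using q by (auto simp: norm_power power_less_one_iff)
  have A: "A \<noteq> 0"
    unfolding A_def using prodinf_one_plus_geometric_nonzero[OF Q(1)] q(1) .
  obtain c where c: "c \<noteq> 0"
    "\<And>z. norm (q^2) ^ 2 < norm z \<Longrightarrow> norm z < 1 / norm (q^2) \<Longrightarrow> theta z (q^2) = c * triple_prod z (q^2)"
    using jacobi_triple_product[OF Q] by blast
  have "norm (q^2) ^ 2 < norm q" "norm q < 1 / norm (q^2)"
    and "norm (q^2) ^ 2 < norm (q^2)" "norm (q^2) < 1 / norm (q^2)"
    using norm_power_in_annulus[OF q, of 1 2] norm_power_in_annulus[OF q, of 2 2] by simp_all
  then have "theta3 q = c * triple_prod q (q^2)" and "theta2 q = c * triple_prod (q^2) (q^2)"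
    using c(2) has_sum_theta3(2)[OF q] has_sum_theta2(2)[OF q] by auto
  moreover have "triple_prod q (q^2) = A * A"
    unfolding triple_prod_def A_def using q by (simp add: power2_eq_square)
  moreover have "triple_prod (q^2) (q^2) = B * (2 * B)"
    unfolding triple_prod_def B_def
    using prodinf_one_plus_geometric_unfold[OF Q(1), of 1] Q by simp
  ultimately show "theta3 q \<noteq> 0" "theta2 q / theta3 q = 2 * (B / A) ^ 2"
    using c(1) A by (simp_all add: field_simps power2_eq_square)
qed

lemma u_fun_square:
  assumes "Im \<tau> > 0"
  shows "u_fun \<tau> ^ 2 = qpow (1/4) \<tau> * theta2 (qpow 1 \<tau>) / theta3 (qpow 1 \<tau>)"
proof -
  define q where "q = qpow 1 \<tau>"
  define A where "A = (\<Prod>n. 1 + q * (q^2) ^ n)"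
  define B where "B = (\<Prod>n. 1 + q^2 * (q^2) ^ n)"
  have q: "norm q < 1" "q \<noteq> 0"
    using assms by (auto simp: q_def norm_qpow_one_less qpow_nonzero)
  have "u_fun \<tau> = complex_of_real (sqrt 2) * qpow (1/8) \<tau> * (B / A)"
    unfolding u_fun_def q_def[symmetric] prodinf_powi_alternating[OF q(1)] A_def B_def ..
  then have "u_fun \<tau> ^ 2 = complex_of_real (sqrt 2) ^ 2 * qpow (1/8) \<tau> ^ 2 * (B / A) ^ 2"
    by (simp only: power_mult_distrib)
  also have "\<dots> = qpow (1/4) \<tau> * (theta2 q / theta3 q)"
    using theta2_div_theta3(2)[OF q] by (simp add: A_def B_def qpow_power2 flip: of_real_power)
  finally show ?thesis
    by (simp add: q_def)
qed

lemma modular_relation_from_duplication: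
  fixes X Y a b q T3 T2 T3' T2' :: complex
  assumes nonzero: "T3 \<noteq> 0" "T3' \<noteq> 0"
    and X: "X = a * T2 / T3" and Y: "Y = b * T2' / T3'" and ab: "a^2 = b" "b^2 = q"
    and dup3: "T3^2 = T3'^2 + q * T2'^2" and dup2: "T2^2 = 2 * T2' * T3'"
  shows "X^2 * (Y^2 + 1) = 2 * Y"
proof -
  have "X^2 = b * (2 * T2' * T3') / T3^2"
    unfolding X using ab(1) dup2 by (simp add: power_divide power_mult_distrib)
  moreover have "Y^2 + 1 = T3^2 / T3'^2"
    unfolding Y dup3 using ab(2) nonzero by (simp add: power_divide power_mult_distrib field_simps)
  ultimately show ?thesis
    unfolding Y using nonzero by (simp add: field_simps power2_eq_square)
qed

lemma u_fun_modular_equation: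
  assumes "Im \<tau> > 0"
  shows "u_fun \<tau> ^ 4 * (u_fun (2 * \<tau>) ^ 4 + 1) = 2 * u_fun (2 * \<tau>) ^ 2"
proof -
  define q where "q = qpow 1 \<tau>"
  have q: "norm q < 1" "q \<noteq> 0"
    using assms by (auto simp: q_def norm_qpow_one_less qpow_nonzero)
  have q2: "norm (q^2) < 1" "q^2 \<noteq> 0"
    using q by (auto simp: norm_power power_less_one_iff)
  have "qpow 1 (2 * \<tau>) = q^2" and "qpow (1/4) (2 * \<tau>) = qpow (1/2) \<tau>"
    by (simp_all add: q_def qpow_double_arg qpow_power2)
  then have y: "u_fun (2 * \<tau>) ^ 2 = qpow (1/2) \<tau> * theta2 (q^2) / theta3 (q^2)"
    using u_fun_square[of "2 * \<tau>"] assms by simp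
  have x: "u_fun \<tau> ^ 2 = qpow (1/4) \<tau> * theta2 q / theta3 q"
    using u_fun_square[OF assms] by (simp add: q_def)
  have "qpow (1/4) \<tau> ^ 2 = qpow (1/2) \<tau>" and "qpow (1/2) \<tau> ^ 2 = q"
    by (simp_all add: q_def qpow_power2)
  from modular_relation_from_duplication[OF theta2_div_theta3(1)[OF q] theta2_div_theta3(1)[OF q2]
         x y this theta3_duplication[OF q] theta2_duplication[OF q]]
  have "(u_fun \<tau> ^ 2) ^ 2 * ((u_fun (2 * \<tau>) ^ 2) ^ 2 + 1) = 2 * u_fun (2 * \<tau>) ^ 2" .
  then show ?thesis
    by (simp flip: power_mult)
qed


section \<open>The modular equation for v\<close>

definition kron8_prod :: "complex \<Rightarrow> complex" where
  "kron8_prod q = (\<Prod>n. (1 - q ^ (n + 1)) powi kron8 (n + 1))"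

text \<open>The factors n = 8j+1, ..., 8j+8 of \<open>kron8_prod q\<close>, with X = q^(8j): the Kronecker symbol
  (8/n) is 1, -1, -1, 1 at n = 1, 3, 5, 7 modulo 8 and vanishes at even n.\<close>
definition kron8_block :: "complex \<Rightarrow> complex \<Rightarrow> complex" where
  "kron8_block q X = (1 - q * X) * (1 - q^7 * X) / ((1 - q^3 * X) * (1 - q^5 * X))"

lemma prod_lessThan_8:
  fixes h :: "nat \<Rightarrow> 'a :: comm_monoid_mult"
  shows "(\<Prod>i<8. h i) = h 0 * h 1 * h 2 * h 3 * h 4 * h 5 * h 6 * h 7"
  by (simp add: numeral_eq_Suc mult_ac)

lemma kron8_periodic: "kron8 (8 * j + r) = kron8 r"
  unfolding kron8_def by presburger

lemma kron8_prod_block: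
  fixes q :: complex
  shows "(\<Prod>i<8. (1 - q ^ (8 * j + i + 1)) powi kron8 (8 * j + i + 1)) = kron8_block q ((q^8) ^ j)"
proof -
  define X where "X = (q^8) ^ j"
  have pw: "q ^ (8 * j + (i + 1)) = q ^ (i + 1) * X" for i
    unfolding X_def power_add power_mult by (rule mult.commute)
  have "(1 - q ^ (8 * j + (i + 1))) powi kron8 (8 * j + (i + 1)) = (1 - q ^ (i + 1) * X) powi kron8 (i + 1)" for i
    unfolding kron8_periodic pw ..
  then have "(\<Prod>i<8. (1 - q ^ (8 * j + i + 1)) powi kron8 (8 * j + i + 1))
               = (\<Prod>i<8. (1 - q ^ (i + 1) * X) powi kron8 (i + 1))"
    by (simp add: add.assoc)
  also have "\<dots> = kron8_block q X"
    unfolding prod_lessThan_8 kron8_block_def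
    by (simp add: kron8_def divide_inverse inverse_mult_distrib mult_ac)
  finally show ?thesis
    unfolding X_def .
qed

lemma tendsto_kron8_prod:
  fixes q :: complex
  assumes "norm q < 1"
  shows "(\<lambda>m. \<Prod>j<m. kron8_block q ((q^8) ^ j)) \<longlonglongrightarrow> kron8_prod q"
proof -
  have "convergent_prod (\<lambda>n. (1 - q ^ (n + 1)) powi kron8 (n + 1))"
    using convergent_prod_powi_sign[OF assms, of "-1" "\<lambda>n. kron8 (n + 1)"]
    by (simp add: kron8_def)
  from has_prod_tendsto_blocks[OF convergent_prod_has_prod[OF this], of 8]
  show ?thesis
    unfolding kron8_prod_block kron8_prod_def[symmetric] by simp
qed

lemma kron8_block_square:
  "kron8_block (q^2) (((q^2)^8) ^ j) = kron8_block (q^2) (((q^8) ^ j)^2)"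
  by (simp flip: power_mult add: mult.commute)

lemma one_minus_mult_nonzero:
  fixes q X :: complex
  assumes "norm q < 1" and "0 < k" and "norm X \<le> 1"
  shows "1 - q ^ k * X \<noteq> 0" and "1 + q ^ k * X \<noteq> 0"
proof -
  have "norm (q ^ k * X) \<le> norm q ^ k"
    using assms(3) by (simp add: norm_mult norm_power mult_left_le)
  also have "\<dots> < 1"
    using assms(1,2) by (simp add: power_less_one_iff)
  finally have "norm (q ^ k * X) < 1" .
  then show "1 + q ^ k * X \<noteq> 0" and "1 - q ^ k * X \<noteq> 0"
    using one_add_nonzero_if_norm_less[of "q ^ k * X"] one_add_nonzero_if_norm_less[of "- (q ^ k * X)"]
    by auto
qed

lemma kron8_prod_mult_triple_prod_16:
  fixes q :: complex
  assumes q: "norm q < 1" "q \<noteq> 0"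
  shows "kron8_prod (q^2) * triple_prod (-(q^6)) (q^16) = triple_prod (-(q^2)) (q^16)"
proof -
  have Q: "norm (q^16) < 1" and q2: "norm (q^2) < 1"
    using q by (simp_all add: norm_power power_less_one_iff)
  define K where "K = (\<lambda>j. kron8_block (q^2) (((q^2)^8) ^ j))"
  define T where "T = (\<lambda>z j. \<Prod>i<1. (1 + z * (q^16) ^ (1 * j + i)) * (1 + (q^16 / z) * (q^16) ^ (1 * j + i)))"
  have "K j * T (-(q^6)) j = T (-(q^2)) j" for j
  proof -
    define W where "W = (q^16) ^ j"
    have W: "norm W \<le> 1"
      using Q by (simp add: W_def norm_power power_le_one)
    have T: "T z j = (1 + z * W) * (1 + (q^16 / z) * W)" for z
      unfolding T_def W_def by simp
    have div: "q^16 / -(q^6) = - (q^10)" "q^16 / -(q^2) = - (q^14)"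
      using q(2) by (simp_all add: field_simps flip: power_add)
    have K: "K j = (1 - q^2 * W) * (1 - q^14 * W) / ((1 - q^6 * W) * (1 - q^10 * W))"
      unfolding K_def kron8_block_def W_def by (simp flip: power_mult)
    have "(1 - q^6 * W) * (1 - q^10 * W) \<noteq> 0"
      using one_minus_mult_nonzero[OF q(1), of 6 W] one_minus_mult_nonzero[OF q(1), of 10 W] W by simp
    then show ?thesis
      unfolding T div K by simp
  qed
  then have "(\<Prod>j<m. K j) * (\<Prod>j<m. T (-(q^6)) j) = (\<Prod>j<m. T (-(q^2)) j)" for m
    unfolding prod.distrib[symmetric] by simp
  moreover have "(\<lambda>m. (\<Prod>j<m. K j) * (\<Prod>j<m. T (-(q^6)) j))
                   \<longlonglongrightarrow> kron8_prod (q^2) * triple_prod (-(q^6)) (q^16)"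
    unfolding K_def T_def
    by (intro tendsto_mult tendsto_kron8_prod[OF q2] tendsto_triple_prod_blocks[OF Q]) simp
  moreover have "(\<lambda>m. \<Prod>j<m. T (-(q^2)) j) \<longlonglongrightarrow> triple_prod (-(q^2)) (q^16)"
    unfolding T_def by (intro tendsto_triple_prod_blocks[OF Q]) simp
  ultimately show ?thesis
    using LIMSEQ_unique by simp
qed

lemma block_product_identity:
  fixes A A' B B' C C' D D' :: "'a :: field"
  assumes "B \<noteq> 0" "B' \<noteq> 0" "C \<noteq> 0" "C' \<noteq> 0"
  shows "(A * D / (B * C))^2 * (A' * B * (C * D'))
           = (A * A') * (D * D') / ((B * B') * (C * C')) * (A * B' * (C' * D))"
  using assms by (simp add: field_simps power2_eq_square)

lemma kron8_block_power2:
  fixes q X :: complex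
  shows "kron8_block (q^2) (X^2) = ((1 - q * X) * (1 + q * X)) * ((1 - q^7 * X) * (1 + q^7 * X))
           / (((1 - q^3 * X) * (1 + q^3 * X)) * ((1 - q^5 * X) * (1 + q^5 * X)))"
proof -
  have "1 - (q^2)^k * X^2 = (1 - q^k * X) * (1 + q^k * X)" for k
  proof -
    have "(q^2)^k = (q^k)^2"
      by (simp add: mult.commute flip: power_mult)
    then show ?thesis
      by (simp add: algebra_simps power2_eq_square)
  qed
  then show ?thesis
    unfolding kron8_block_def by (metis power_one_right)
qed

lemma triple_prod_block_minus_q4:
  fixes q z :: complex and j :: nat
  defines "X \<equiv> (q^8) ^ j"
  shows "(\<Prod>i<2. (1 + z * (-(q^4)) ^ (2 * j + i)) * (1 + (-(q^4) / z) * (-(q^4)) ^ (2 * j + i)))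
           = (1 + z * X) * (1 + (-(q^4) / z) * X) * ((1 + z * - (q^4 * X)) * (1 + (-(q^4) / z) * - (q^4 * X)))"
proof -
  have "(-(q^4))^2 = q^8"
    by (simp flip: power_mult)
  then have even: "(-(q^4)) ^ (2 * j) = X"
    unfolding X_def power_mult by simp
  then have odd: "(-(q^4)) ^ (2 * j + 1) = - (q^4 * X)"
    unfolding power_add by simp
  have "(\<Prod>i<2. h i) = h 0 * h 1" for h :: "nat \<Rightarrow> complex"
    by (simp add: numeral_2_eq_2)
  then show ?thesis
    by (simp only: add_0_right even odd)
qed

lemma kron8_block_triple_prod_block_4:
  fixes q :: complex
  assumes q: "norm q < 1" "q \<noteq> 0"
  shows "kron8_block q ((q^8) ^ j) ^ 2
           * (\<Prod>i<2. (1 + q * (-(q^4)) ^ (2 * j + i)) * (1 + (-(q^4) / q) * (-(q^4)) ^ (2 * j + i)))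
         = kron8_block (q^2) (((q^2)^8) ^ j)
           * (\<Prod>i<2. (1 + - q * (-(q^4)) ^ (2 * j + i)) * (1 + (-(q^4) / - q) * (-(q^4)) ^ (2 * j + i)))"
proof -
  define X where "X = (q^8) ^ j"
  have X: "norm X \<le> 1"
    using q(1) by (simp add: X_def norm_power power_le_one)
  have "-(q^4) / q = - (q^3)" "-(q^4) / -q = q^3"
    using q(2) by (simp_all add: field_simps flip: power_add power_Suc)
  moreover have "q * (q^4 * X) = q^5 * X" and "q^3 * (q^4 * X) = q^7 * X"
    by (simp_all add: mult.assoc flip: power_add power_Suc)
  ultimately have "(\<Prod>i<2. (1 + q * (-(q^4)) ^ (2 * j + i)) * (1 + (-(q^4) / q) * (-(q^4)) ^ (2 * j + i)))
                     = (1 + q * X) * (1 - q^3 * X) * ((1 - q^5 * X) * (1 + q^7 * X))"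
    and "(\<Prod>i<2. (1 + - q * (-(q^4)) ^ (2 * j + i)) * (1 + (-(q^4) / - q) * (-(q^4)) ^ (2 * j + i)))
                     = (1 - q * X) * (1 + q^3 * X) * ((1 + q^5 * X) * (1 - q^7 * X))"
    unfolding triple_prod_block_minus_q4 X_def[symmetric] by simp_all
  moreover have "kron8_block (q^2) (((q^2)^8) ^ j) = kron8_block (q^2) (X^2)"
    unfolding X_def by (rule kron8_block_square)
  ultimately show ?thesis
    unfolding kron8_block_power2 X_def[symmetric] kron8_block_def[of q]
    by (simp only:) (rule block_product_identity;
        use one_minus_mult_nonzero[OF q(1), of 3 X] one_minus_mult_nonzero[OF q(1), of 5 X] X in auto)
qed

lemma kron8_prod_mult_triple_prod_4:
  fixes q :: complex
  assumes q: "norm q < 1" "q \<noteq> 0"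
  shows "kron8_prod q ^ 2 * triple_prod q (-(q^4)) = kron8_prod (q^2) * triple_prod (-q) (-(q^4))"
proof -
  have Q: "norm (-(q^4)) < 1" and q2: "norm (q^2) < 1"
    using q by (simp_all add: norm_power power_less_one_iff)
  define K where "K = (\<lambda>j. kron8_block q ((q^8) ^ j))"
  define K2 where "K2 = (\<lambda>j. kron8_block (q^2) (((q^2)^8) ^ j))"
  define T where "T = (\<lambda>z j. \<Prod>i<2. (1 + z * (-(q^4)) ^ (2 * j + i)) * (1 + (-(q^4) / z) * (-(q^4)) ^ (2 * j + i)))"
  have "K j ^ 2 * T q j = K2 j * T (-q) j" for j
    unfolding K_def K2_def T_def by (rule kron8_block_triple_prod_block_4[OF q])
  then have "(\<Prod>j<m. K j) ^ 2 * (\<Prod>j<m. T q j) = (\<Prod>j<m. K2 j) * (\<Prod>j<m. T (-q) j)" for m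
    unfolding prod_power_distrib prod.distrib[symmetric] by simp
  moreover have "(\<lambda>m. (\<Prod>j<m. K j) ^ 2 * (\<Prod>j<m. T q j)) \<longlonglongrightarrow> kron8_prod q ^ 2 * triple_prod q (-(q^4))"
    unfolding K_def T_def
    by (intro tendsto_mult tendsto_power tendsto_kron8_prod[OF q(1)] tendsto_triple_prod_blocks[OF Q]) simp
  moreover have "(\<lambda>m. (\<Prod>j<m. K2 j) * (\<Prod>j<m. T (-q) j)) \<longlonglongrightarrow> kron8_prod (q^2) * triple_prod (-q) (-(q^4))"
    unfolding K2_def T_def
    by (intro tendsto_mult tendsto_kron8_prod[OF q2] tendsto_triple_prod_blocks[OF Q]) simp
  ultimately show ?thesis
    using LIMSEQ_unique by simp
qed

lemma v_fun_eq_kron8_prod: "v_fun \<tau> = qpow (1/2) \<tau> * kron8_prod (qpow 1 \<tau>)"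
  unfolding v_fun_def kron8_prod_def ..

lemma theta_minus_q4_dissection:
  fixes q e :: complex
  assumes q: "norm q < 1" "q \<noteq> 0" and e: "e^2 = 1"
  shows "theta (e * q) (-(q^4)) = theta (-(q^6)) (q^16) + e * q * theta (-(q^2)) (q^16)"
proof -
  have Q4: "norm (-(q^4)) < 1" "-(q^4) \<noteq> 0"
    using q by (simp_all add: norm_power power_less_one_iff)
  have "e * q \<noteq> 0"
    using e q(2) by auto
  moreover have "(e * q)^2 = q^2"
    using e by (simp add: power_mult_distrib)
  moreover have "(-(q^4))^4 = q^16"
    by (simp flip: power_mult)
  moreover have "q^2 * -(q^4) = -(q^6)" and "-(q^4) / q^2 = -(q^2)"
    using q(2) by (simp_all add: field_simps flip: power_add)
  ultimately show ?thesis
    using theta_dissection[OF Q4, of "e * q"] by simp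
qed

lemma v_fun_double_mult_theta:
  assumes "Im \<tau> > 0"
  defines "q \<equiv> qpow 1 \<tau>"
  shows "v_fun (2 * \<tau>) * theta (-(q^6)) (q^16) = q * theta (-(q^2)) (q^16)"
proof -
  have q: "norm q < 1" "q \<noteq> 0"
    using assms by (auto simp: q_def norm_qpow_one_less qpow_nonzero)
  have Q16: "norm (q^16) < 1" "q^16 \<noteq> 0"
    using q by (simp_all add: norm_power power_less_one_iff)
  obtain c where c: "\<And>z. norm (q^16) ^ 2 < norm z \<Longrightarrow> norm z < 1 / norm (q^16)
                           \<Longrightarrow> theta z (q^16) = c * triple_prod z (q^16)"
    using jacobi_triple_product[OF Q16] by blast
  have "theta (-(q^2)) (q^16) = c * triple_prod (-(q^2)) (q^16)"
    and "theta (-(q^6)) (q^16) = c * triple_prod (-(q^6)) (q^16)"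
    using c norm_power_in_annulus[OF q, of 2 16] norm_power_in_annulus[OF q, of 6 16] by simp_all
  moreover have "v_fun (2 * \<tau>) = q * kron8_prod (q^2)"
    unfolding v_fun_eq_kron8_prod qpow_double_arg by (simp add: q_def qpow_power2)
  ultimately show ?thesis
    using kron8_prod_mult_triple_prod_16[OF q] by (simp add: mult_ac)
qed

lemma v_fun_square_mult_triple_prod:
  assumes "Im \<tau> > 0"
  defines "q \<equiv> qpow 1 \<tau>"
  shows "v_fun \<tau> ^ 2 * triple_prod q (-(q^4)) = v_fun (2 * \<tau>) * triple_prod (-q) (-(q^4))"
proof -
  have q: "norm q < 1" "q \<noteq> 0"
    using assms by (auto simp: q_def norm_qpow_one_less qpow_nonzero)
  have "v_fun \<tau> ^ 2 = q * kron8_prod q ^ 2"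
    unfolding v_fun_eq_kron8_prod by (simp add: q_def power_mult_distrib qpow_power2)
  moreover have "v_fun (2 * \<tau>) = q * kron8_prod (q^2)"
    unfolding v_fun_eq_kron8_prod qpow_double_arg by (simp add: q_def qpow_power2)
  ultimately show ?thesis
    using kron8_prod_mult_triple_prod_4[OF q] by (simp add: mult.assoc)
qed

lemma v_fun_modular_equation:
  assumes "Im \<tau> > 0"
  shows "v_fun \<tau> ^ 2 * v_fun (2 * \<tau>) + v_fun \<tau> ^ 2 + v_fun (2 * \<tau>) ^ 2 = v_fun (2 * \<tau>)"
proof -
  define q where "q = qpow 1 \<tau>"
  define x where "x = v_fun \<tau>"
  define y where "y = v_fun (2 * \<tau>)"
  define A where "A = theta (-(q^2)) (q^16)"
  define B where "B = theta (-(q^6)) (q^16)"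
  define J where "J = triple_prod q (-(q^4))"
  define J' where "J' = triple_prod (-q) (-(q^4))"
  have q: "norm q < 1" "q \<noteq> 0"
    using assms by (auto simp: q_def norm_qpow_one_less qpow_nonzero)
  have Q4: "norm (-(q^4)) < 1" "-(q^4) \<noteq> 0"
    using q by (simp_all add: norm_power power_less_one_iff)
  obtain c where c: "c \<noteq> 0"
    "\<And>z. norm (-(q^4)) ^ 2 < norm z \<Longrightarrow> norm z < 1 / norm (-(q^4))
           \<Longrightarrow> theta z (-(q^4)) = c * triple_prod z (-(q^4))"
    using jacobi_triple_product[OF Q4] by blast
  have J: "c * J = B + q * A"
    using c(2)[of q] norm_power_in_annulus[OF q, of 1 4] theta_minus_q4_dissection[OF q, of 1]
    by (simp add: A_def B_def J_def)
  have J': "c * J' = B - q * A"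
    using c(2)[of "-q"] norm_power_in_annulus[OF q, of 1 4] theta_minus_q4_dissection[OF q, of "-1"]
    by (simp add: A_def B_def J'_def)
  have "(1 - y) * (B + q * A) = (1 + y) * (B - q * A)"
    using v_fun_double_mult_theta[OF assms] unfolding y_def A_def B_def q_def[symmetric]
    by (simp add: algebra_simps)
  then have "c * ((1 - y) * J) = c * ((1 + y) * J')"
    unfolding mult.left_commute[of c] J J' .
  with c(1) have key: "(1 - y) * J = (1 + y) * J'"
    by simp
  have J_nonzero: "J \<noteq> 0"
    unfolding J_def
  proof (rule triple_prod_nonzero[OF Q4(1) q(1)])
    have "q^4 / q = q^3"
      using q(2) by (simp add: field_simps flip: power_Suc)
    then show "norm (-(q^4) / q) < 1"
      using q by (simp add: norm_power power_less_one_iff)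
  qed
  have x2: "x^2 * J = y * J'"
    using v_fun_square_mult_triple_prod[OF assms] unfolding x_def y_def J_def J'_def q_def .
  have "(x^2 * (1 + y)) * J = (1 + y) * (x^2 * J)"
    by (simp only: mult_ac)
  also have "\<dots> = y * ((1 + y) * J')"
    unfolding x2 by (simp only: mult_ac)
  also have "\<dots> = (y * (1 - y)) * J"
    unfolding key[symmetric] by (simp only: mult_ac)
  finally have "x^2 * (1 + y) = y * (1 - y)"
    using J_nonzero by simp
  then show ?thesis
    unfolding x_def y_def by (simp add: algebra_simps power2_eq_square)
qed

theorem proposition1:
  fixes \<tau> :: complex
  assumes "Im \<tau> > 0"
  shows "(let x = u_fun \<tau>; y = u_fun (2 * \<tau>) in x ^ 4 * (y ^ 4 + 1) = 2 * y ^ 2)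
       \<and> (let x = v_fun \<tau>; y = v_fun (2 * \<tau>) in x ^ 2 * y + x ^ 2 + y ^ 2 = y)"
  using u_fun_modular_equation[OF assms] v_fun_modular_equation[OF assms] by simp

end
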